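(* For every base $b\ge 2$ there exist infinitely many $b$-wARH numbers that are not $b$-Niven numbers.
   Context: Fix a base $b\ge 2$. $s_b(N)$ is the sum of the base-$b$ digits of $N$. For a positive integer $X$, its reversal $X^R$ is the integer whose base-$b$ representation is that of $X$ written in reverse order (leading zeros of the result are dropped). A positive integer $N$ is a $b$-wARH number if there exists an integer $A\ge 0$ such that $N=(A+s_b(N))+(A+s_b(N))^R$. A positive integer $N$ is a $b$-Niven number if $s_b(N)$ divides $N$. *)

theory Defs
  imports Main
begin

fun digits :: "nat \<Rightarrow> nat \<Rightarrow> nat list" where
  "digits b n = (if b < 2 \<or> n = 0 then [] else n mod b # digits b (n div b))"

declare digits.simps[simp del]

fun from_digits :: "nat \<Rightarrow> nat list \<Rightarrow> nat" where
  "from_digits b [] = 0"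
| "from_digits b (d # ds) = d + b * from_digits b ds"

definition digit_sum :: "nat \<Rightarrow> nat \<Rightarrow> nat" where
  "digit_sum b n = sum_list (digits b n)"

text \<open>Reversal: write the digits in reverse order; leading zeros of the result
  are dropped automatically when evaluating the value.\<close>
definition reversal :: "nat \<Rightarrow> nat \<Rightarrow> nat" where
  "reversal b x = from_digits b (rev (digits b x))"

definition wARH :: "nat \<Rightarrow> nat \<Rightarrow> bool" where
  "wARH b N \<longleftrightarrow> N > 0 \<and>
     (\<exists>A::nat. N = (A + digit_sum b N) + reversal b (A + digit_sum b N))"

definition Niven :: "nat \<Rightarrow> nat \<Rightarrow> bool" where
  "Niven b N \<longleftrightarrow> N > 0 \<and> digit_sum b N dvd N"

end

theory Submission
  imports Defs "HOL-Library.Infinite_Set"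
begin

text \<open>
  Let \<open>P\<close> be a base-\<open>b\<close> palindrome and \<open>b\<^sup>m > P\<close>. Then \<open>N = P + b\<^sup>m P\<close> is the sum of
  \<open>X = b\<^sup>m P\<close> and its reversal \<open>P\<close>, and its digit sum is \<open>2 s(P) \<le> X\<close>, so \<open>A = X - 2 s(P)\<close>
  witnesses that \<open>N\<close> is wARH. For the palindrome \<open>P\<close> with digits \<open>1, b-2, 1\<close> we have
  \<open>s(N) = 2b\<close> while \<open>N \<equiv> 1 (mod b)\<close>, so \<open>N\<close> is not Niven; letting \<open>m\<close> vary gives
  infinitely many such \<open>N\<close>.
\<close>

lemma digits_add_mult:
  assumes "b \<ge> 2" "d < b" "d + b * n > 0"
  shows "digits b (d + b * n) = d # digits b n"
  using assms by (subst digits.simps) simp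

lemma from_digits_digits:
  assumes "b \<ge> 2"
  shows "from_digits b (digits b n) = n"
proof (induction n rule: less_induct)
  case (less n)
  show ?case
  proof (cases "n = 0")
    case False
    then have "digits b n = n mod b # digits b (n div b)"
      using assms by (subst digits.simps) simp
    moreover have "n div b < n" using False assms by simp
    ultimately show ?thesis using less.IH by simp
  qed (simp add: digits.simps)
qed

lemma digits_from_digits:
  assumes "b \<ge> 2" "\<forall>d \<in> set ds. d < b" "ds = [] \<or> last ds \<noteq> 0"
  shows "digits b (from_digits b ds) = ds"
  using assms(2,3)
proof (induction ds)
  case (Cons d ds)
  have IH: "digits b (from_digits b ds) = ds"
    using Cons by (cases ds) auto
  show ?case
  proof (cases "d + b * from_digits b ds = 0")
    case True
    then show ?thesis using IH Cons.prems by (auto simp: digits.simps)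
  next
    case False
    then show ?thesis using IH Cons.prems assms(1) by (simp add: digits_add_mult)
  qed
qed (simp add: digits.simps)

lemma less_pow_length_digits:
  assumes "b \<ge> 2"
  shows "n < b ^ length (digits b n)"
proof (induction n rule: less_induct)
  case (less n)
  show ?case
  proof (cases "n = 0")
    case False
    then have "digits b n = n mod b # digits b (n div b)"
      using assms by (subst digits.simps) simp
    moreover have "n div b < b ^ length (digits b (n div b))"
      using less.IH False assms by simp
    ultimately show ?thesis
      using assms by (simp add: div_less_iff_less_mult mult.commute)
  qed (simp add: digits.simps)
qed

lemma digit_sum_add_mult:
  assumes "b \<ge> 2" "d < b"
  shows "digit_sum b (d + b * n) = d + digit_sum b n"
proof (cases "d + b * n = 0")
  case True
  then show ?thesis using assms by (simp add: digit_sum_def digits.simps)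
next
  case False
  then show ?thesis using digits_add_mult[OF assms] by (simp add: digit_sum_def)
qed

lemma digit_sum_add_pow_mult:
  assumes "b \<ge> 2" "a < b ^ k"
  shows "digit_sum b (a + b ^ k * n) = digit_sum b a + digit_sum b n"
  using assms(2)
proof (induction k arbitrary: a)
  case 0
  then show ?case by (simp add: digit_sum_def digits.simps)
next
  case (Suc k)
  have "a div b < b ^ k"
    using Suc.prems assms(1) by (simp add: less_mult_imp_div_less mult.commute)
  moreover have "a + b ^ Suc k * n = a mod b + b * (a div b + b ^ k * n)"
    by (simp add: algebra_simps)
  moreover have "digit_sum b a = a mod b + digit_sum b (a div b)"
    using digit_sum_add_mult[OF assms(1), of "a mod b" "a div b"] assms(1) by simp
  ultimately show ?case
    using Suc.IH digit_sum_add_mult[OF assms(1)] assms(1) by simp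
qed

lemma digit_sum_le: "digit_sum b n \<le> n"
proof (induction n rule: less_induct)
  case (less n)
  show ?case
  proof (cases "b < 2 \<or> n = 0")
    case False
    then have "digit_sum b n = n mod b + digit_sum b (n div b)"
      by (simp add: digit_sum_def digits.simps[of b n])
    also have "\<dots> \<le> n mod b + n div b"
      using less.IH False by simp
    also have "\<dots> \<le> n mod b + b * (n div b)"
      using False by (intro add_left_mono) simp
    also have "\<dots> = n"
      by (rule mod_mult_div_eq)
    finally show ?thesis .
  qed (auto simp: digit_sum_def digits.simps)
qed

lemma digits_pow_mult:
  assumes "b \<ge> 2" "n > 0"
  shows "digits b (b ^ k * n) = replicate k 0 @ digits b n"
proof (induction k)
  case (Suc k)
  have "digits b (0 + b * (b ^ k * n)) = 0 # digits b (b ^ k * n)"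
    using assms by (intro digits_add_mult) auto
  then show ?case using Suc by (simp add: mult.assoc)
qed simp

lemma from_digits_append_zeros: "from_digits b (xs @ replicate k 0) = from_digits b xs"
proof (induction xs)
  case Nil
  then show ?case by (induction k) auto
qed simp

lemma reversal_pow_mult:
  assumes "b \<ge> 2" "n > 0"
  shows "reversal b (b ^ k * n) = reversal b n"
  using assms by (simp add: reversal_def digits_pow_mult from_digits_append_zeros)

lemma wARH_palindrome_repeat:
  assumes "b \<ge> 2" "P > 0" "reversal b P = P" "P < b ^ m"
  shows "wARH b (P + b ^ m * P)"
proof -
  define N where "N = P + b ^ m * P"
  define A where "A = b ^ m * P - digit_sum b N"
  have "digit_sum b N = 2 * digit_sum b P"
    unfolding N_def using digit_sum_add_pow_mult[OF assms(1,4)] by simp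
  also have "\<dots> \<le> b ^ m * P"
  proof (rule mult_le_mono)
    show "2 \<le> b ^ m" using assms(2,4) by linarith
  qed (rule digit_sum_le)
  finally have "A + digit_sum b N = b ^ m * P"
    unfolding A_def by simp
  then have "N = (A + digit_sum b N) + reversal b (A + digit_sum b N)"
    using reversal_pow_mult[OF assms(1,2)] assms(3) by (simp add: N_def)
  then show ?thesis
    using assms(2) unfolding wARH_def N_def by blast
qed

lemma not_Niven_if_base_dvd_digit_sum:
  assumes "b dvd digit_sum b N" "\<not> b dvd N"
  shows "\<not> Niven b N"
  using assms dvd_trans unfolding Niven_def by blast

theorem corollary8:
  fixes b :: nat
  assumes "b \<ge> 2"
  shows "infinite {N. wARH b N \<and> \<not> Niven b N}"
proof -
  define P where "P = from_digits b [1, b - 2, 1]"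
  have digits_P: "digits b P = [1, b - 2, 1]"
    unfolding P_def using assms by (intro digits_from_digits) auto
  have "P mod b = 1"
    using assms unfolding P_def from_digits.simps(2) mod_mult_self2 by simp
  then have "P > 0" and P_not_dvd: "\<not> b dvd P"
    using assms by (auto simp: dvd_eq_mod_eq_0 intro: Nat.gr0I)
  have "reversal b P = P" and sum_P: "digit_sum b P = b"
    using digits_P from_digits_digits[OF assms, of P] assms
    by (simp_all add: reversal_def digit_sum_def)
  have "P < b ^ 3"
    using less_pow_length_digits[OF assms, of P] digits_P by (simp add: power3_eq_cube)
  define N where "N m = P + b ^ (m + 3) * P" for m
  have "wARH b (N m) \<and> \<not> Niven b (N m)" for m
  proof
    have "P < b ^ (m + 3)"
      using \<open>P < b ^ 3\<close> power_increasing[of 3 "m + 3" b] assms by linarith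
    then have "wARH b (N m)" and "digit_sum b (N m) = 2 * b"
      using wARH_palindrome_repeat digit_sum_add_pow_mult assms \<open>P > 0\<close> \<open>reversal b P = P\<close> sum_P
      by (simp_all add: N_def)
    moreover have "\<not> b dvd N m"
      using P_not_dvd by (simp add: N_def dvd_add_left_iff)
    ultimately show "wARH b (N m)" "\<not> Niven b (N m)"
      using not_Niven_if_base_dvd_digit_sum by auto
  qed
  moreover have "strict_mono N"
    using assms \<open>P > 0\<close> by (intro strict_monoI) (simp add: N_def)
  then have "infinite (range N)"
    using range_inj_infinite strict_mono_imp_inj_on by blast
  ultimately show ?thesis
    by (elim infinite_super[rotated]) auto
qed

end
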